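(* Fix an integer $d\geq 2$, let $f_n$ be a sequence with $f_n\to\infty$, and set $r_n=f_n\left(\frac{\log n}{n}\right)^{1/d}$. Let $\mathcal{G}_n=\mathcal{G}(\mathcal{X}_n;r_n)$. Let $q,q'\in[0,1]^d$ satisfy $q\preceq_\delta q'$ for some $\delta>0$ independent of $n$. Then almost surely there exist $X,X'\in\mathcal{X}_n$ such that (i) $\|X-q\|_2\leq r_n/2$ and $\|X'-q'\|_2\leq r_n/2$; (ii) $q\preceq X$ and $X'\preceq q'$; (iii) $X$ and $X'$ are connected in $\mathcal{G}_n$ by a monotone path.
   Context: Logarithms are natural. For $p=(p_1,\dots,p_d),p'=(p'_1,\dots,p'_d)\in\mathbb{R}^d$, $p\preceq p'$ means $p_i\leq p'_i$ for all $i$; for $\delta>0$, $p\preceq_\delta p'$ means $p\preceq p'$ and $\min_i(p'_i-p_i)=\delta$. $\mathcal{X}_n$ consists of $n$ points drawn independently and uniformly at random from $[0,1]^d$. $\mathcal{G}(V;r)$ is the directed graph with vertex set $V$ and edges $(x,y)$ for all $x\neq y\in V$ with $\|x-y\|_2\leq r$. A path in this graph is monotone if every traversed edge $(x,y)$ satisfies $x\preceq y$. An event holds almost surely (a.s.) if its probability tends to $1$ as $n\to\infty$. *)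

theory Defs
  imports "HOL-Probability.Probability"
begin

definition vle :: "real ^ 'd \<Rightarrow> real ^ 'd \<Rightarrow> bool" where
  "vle p p' \<longleftrightarrow> (\<forall>i. p $ i \<le> p' $ i)"

definition vle_delta :: "real \<Rightarrow> real ^ 'd \<Rightarrow> real ^ 'd \<Rightarrow> bool" where
  "vle_delta \<delta> p p' \<longleftrightarrow> vle p p' \<and> Min (range (\<lambda>i. p' $ i - p $ i)) = \<delta>"

definition unit_cube :: "(real ^ 'd) set" where
  "unit_cube = {x. \<forall>i. 0 \<le> x $ i \<and> x $ i \<le> 1}"

definition sample :: "nat \<Rightarrow> (nat \<Rightarrow> real ^ 'd) measure" where
  "sample n = PiM {..<n} (\<lambda>_. uniform_measure lborel unit_cube)"

text \<open>A monotone path in the directed graph G(V;r), given as its vertex list: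
  consecutive vertices are distinct elements of V at distance at most r,
  and each traversed edge (x,y) satisfies x \<preceq> y.\<close>
definition monotone_path :: "(real ^ 'd) set \<Rightarrow> real \<Rightarrow> (real ^ 'd) list \<Rightarrow> bool" where
  "monotone_path V r xs \<longleftrightarrow> xs \<noteq> [] \<and> set xs \<subseteq> V \<and>
     (\<forall>i < length xs - 1. xs ! i \<noteq> xs ! Suc i \<and> dist (xs ! i) (xs ! Suc i) \<le> r
        \<and> vle (xs ! i) (xs ! Suc i))"

definition monotone_connected :: "(real ^ 'd) set \<Rightarrow> real \<Rightarrow> real ^ 'd \<Rightarrow> real ^ 'd \<Rightarrow> bool" where
  "monotone_connected V r x y \<longleftrightarrow>
     (\<exists>xs. monotone_path V r xs \<and> hd xs = x \<and> last xs = y)"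

end

theory Submission
  imports Defs
begin

text \<open>Place \<open>K + 1\<close> cubes of side \<open>s \<asymp> \<delta> r\<^sub>n\<close> along the diagonal from \<open>q\<close> to \<open>q'\<close>, the
  \<open>j\<close>-th one with lower corner \<open>q + (j/K)(q' - q - s\<one>)\<close>, where \<open>K \<asymp> d / r\<^sub>n\<close>.  Consecutive
  cubes are shifted by more than \<open>s\<close> in every coordinate but by only \<open>O(1/K + s) \<le> r\<^sub>n\<close> in
  norm, so choosing one sample point in every cube yields a monotone path, which starts within
  \<open>r\<^sub>n/2\<close> above \<open>q\<close> and ends within \<open>r\<^sub>n/2\<close> below \<open>q'\<close>.  A fixed cube is missed by all \<open>n\<close>
  points with probability \<open>(1 - s\<^sup>d)\<^sup>n \<le> exp (-n s\<^sup>d)\<close>, and \<open>n s\<^sup>d \<asymp> f\<^sub>n\<^sup>d log n\<close>; once \<open>f\<^sub>n\<close>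
  is large the union bound over the \<open>O(n)\<close> cubes leaves a failure probability
  \<open>O(exp (-c n) + 1/n)\<close>.\<close>

definition monotone_edge :: "real \<Rightarrow> real^'d \<Rightarrow> real^'d \<Rightarrow> bool" where
  "monotone_edge r x y \<longleftrightarrow> x \<noteq> y \<and> dist x y \<le> r \<and> vle x y"

lemma monotone_path_iff:
  "monotone_path V r xs \<longleftrightarrow>
     xs \<noteq> [] \<and> xs \<in> lists V \<and> (\<forall>i < length xs - 1. monotone_edge r (xs ! i) (xs ! Suc i))"
  by (auto simp: monotone_path_def monotone_edge_def)

definition monotone_crossing :: "(real^'d) set \<Rightarrow> real \<Rightarrow> real^'d \<Rightarrow> real^'d \<Rightarrow> bool" where
  "monotone_crossing V r q q' \<longleftrightarrow>
     (\<exists>X \<in> V. \<exists>X' \<in> V. dist X q \<le> r / 2 \<and> dist X' q' \<le> r / 2 \<and> vle q X \<and> vle X' q' \<and>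
        monotone_connected V r X X')"

lemma vle_delta_le:
  fixes p p' :: "real^'d"
  assumes "vle_delta \<delta> p p'"
  shows "\<delta> \<le> p'$i - p$i"
  using assms Min_le[of "range (\<lambda>i. p'$i - p$i)"] by (auto simp: vle_delta_def)

lemma dist_le_CARD_mult:
  fixes x y :: "real^'d"
  assumes "\<And>i. \<bar>x$i - y$i\<bar> \<le> t"
  shows "dist x y \<le> real CARD('d) * t"
proof -
  have "dist x y \<le> (\<Sum>i\<in>UNIV. \<bar>(x - y)$i\<bar>)" unfolding dist_norm by (rule norm_le_l1_cart)
  also have "\<dots> \<le> (\<Sum>i\<in>(UNIV::'d set). t)" using assms by (intro sum_mono) simp
  finally show ?thesis by simp
qed

definition diagonal_box :: "real^'d \<Rightarrow> real^'d \<Rightarrow> real \<Rightarrow> nat \<Rightarrow> nat \<Rightarrow> (real^'d) set" where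
  "diagonal_box q q' s K j =
     (let c = q + (real j / real K) *\<^sub>R (q' - q - (\<chi> i. s)) in cbox c (c + (\<chi> i. s)))"

lemma mem_diagonal_box:
  "x \<in> diagonal_box q q' s K j \<longleftrightarrow>
     (\<forall>i. q$i + real j / real K * (q'$i - q$i - s) \<le> x$i \<and>
          x$i \<le> q$i + real j / real K * (q'$i - q$i - s) + s)"
  by (simp add: diagonal_box_def Let_def mem_box_cart)

lemma diagonal_box_subset_unit_cube:
  assumes "q \<in> unit_cube" "q' \<in> unit_cube" "\<And>i. q$i + s \<le> q'$i" "s \<ge> 0" "j \<le> K"
  shows "diagonal_box q q' s K j \<subseteq> unit_cube"
proof
  fix x assume x: "x \<in> diagonal_box q q' s K j"
  show "x \<in> unit_cube" unfolding unit_cube_def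
  proof (intro CollectI allI conjI)
    fix i
    have t: "0 \<le> real j / real K" "real j / real K \<le> 1"
      using assms(5) by (auto simp: divide_le_eq_1)
    have v: "0 \<le> q'$i - q$i - s" using assms(3)[of i] by simp
    have "0 \<le> real j / real K * (q'$i - q$i - s)" using t v by simp
    moreover have "real j / real K * (q'$i - q$i - s) \<le> q'$i - q$i - s"
      using mult_right_mono[OF t(2) v] by simp
    moreover have "0 \<le> q$i" "q'$i \<le> 1" using assms(1,2) by (auto simp: unit_cube_def)
    ultimately show "0 \<le> x$i" "x$i \<le> 1" using x unfolding mem_diagonal_box by (smt (verit))+
  qed
qed

lemma monotone_edge_diagonal_boxes:
  fixes q q' :: "real^'d"
  assumes "q \<in> unit_cube" "q' \<in> unit_cube" "\<And>i. s * (real K + 1) < q'$i - q$i" "s \<ge> 0"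
    "j < K" "real CARD('d) * (1 / real K + s) \<le> r"
    "x \<in> diagonal_box q q' s K j" "y \<in> diagonal_box q q' s K (Suc j)"
  shows "monotone_edge r x y"
proof -
  have K: "real K > 0" using assms(5) by simp
  have lt: "x$i < y$i" and close: "\<bar>x$i - y$i\<bar> \<le> 1 / real K + s" for i
  proof -
    let ?v = "q'$i - q$i - s"
    have v: "s * real K < ?v" using assms(3)[of i] by (simp add: algebra_simps)
    have "0 \<le> q$i" "q'$i \<le> 1" using assms(1,2) by (auto simp: unit_cube_def)
    then have v1: "?v \<le> 1" using assms(4) by linarith
    have "real (Suc j) / real K * ?v = real j / real K * ?v + ?v / real K"
      using K by (simp add: field_simps)
    moreover have "s < ?v / real K" using v K by (simp add: field_simps)
    moreover have "?v / real K \<le> 1 / real K" using v1 K by (simp add: divide_right_mono)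
    ultimately show "x$i < y$i" "\<bar>x$i - y$i\<bar> \<le> 1 / real K + s"
      using assms(4,7,8) unfolding mem_diagonal_box by (smt (verit))+
  qed
  have "x \<noteq> y" using lt by blast
  moreover have "dist x y \<le> r" using dist_le_CARD_mult[of x y, OF close] assms(6) by simp
  moreover have "vle x y" unfolding vle_def using lt less_imp_le by blast
  ultimately show ?thesis unfolding monotone_edge_def by blast
qed

lemma diagonal_box_first:
  fixes q q' :: "real^'d"
  assumes "x \<in> diagonal_box q q' s K 0"
  shows "vle q x \<and> dist x q \<le> real CARD('d) * s"
proof -
  have "q$i \<le> x$i \<and> x$i \<le> q$i + s" for i using assms unfolding mem_diagonal_box by simp
  then show ?thesis using dist_le_CARD_mult[of x q s] unfolding vle_def by (smt (verit))
qed

lemma diagonal_box_last: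
  fixes q q' :: "real^'d"
  assumes "x \<in> diagonal_box q q' s K K" "K > 0"
  shows "vle x q' \<and> dist x q' \<le> real CARD('d) * s"
proof -
  have "q'$i - s \<le> x$i \<and> x$i \<le> q'$i" for i using assms unfolding mem_diagonal_box by simp
  then show ?thesis using dist_le_CARD_mult[of x q' s] unfolding vle_def by (smt (verit))
qed

lemma monotone_crossing_if_diagonal_boxes_occupied:
  fixes q q' :: "real^'d"
  assumes "q \<in> unit_cube" "q' \<in> unit_cube" "\<And>i. s * (real K + 1) < q'$i - q$i" "s \<ge> 0"
    "K > 0" "real CARD('d) * (1 / real K + s) \<le> r" "real CARD('d) * s \<le> r / 2"
    and occupied: "\<And>j. j \<le> K \<Longrightarrow> diagonal_box q q' s K j \<inter> V \<noteq> {}"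
  shows "monotone_crossing V r q q'"
proof -
  have "\<forall>j. \<exists>y. j \<le> K \<longrightarrow> y \<in> diagonal_box q q' s K j \<inter> V" using occupied by blast
  then obtain x where x: "\<And>j. j \<le> K \<Longrightarrow> x j \<in> diagonal_box q q' s K j \<inter> V" by metis
  define xs where "xs = map x [0..<Suc K]"
  have "monotone_path V r xs"
    unfolding monotone_path_iff
  proof (intro conjI allI impI)
    show "xs \<noteq> []" "xs \<in> lists V" using x by (auto simp: xs_def simp del: upt_Suc)
    fix i assume "i < length xs - 1"
    then show "monotone_edge r (xs ! i) (xs ! Suc i)"
      using monotone_edge_diagonal_boxes[OF assms(1-4) _ assms(6)] x[of i] x[of "Suc i"]
      by (simp add: xs_def del: upt_Suc)
  qed
  moreover have "hd xs = x 0" "last xs = x K"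
    by (simp_all add: xs_def hd_map last_map del: upt_Suc)
  ultimately have "monotone_connected V r (x 0) (x K)"
    unfolding monotone_connected_def by blast
  moreover have "vle q (x 0) \<and> dist (x 0) q \<le> real CARD('d) * s"
    using x[of 0] by (intro diagonal_box_first[of _ q q' s K]) auto
  moreover have "vle (x K) q' \<and> dist (x K) q' \<le> real CARD('d) * s"
    using x[of K] assms(5) by (intro diagonal_box_last[of _ q q' s K]) auto
  ultimately show ?thesis
    unfolding monotone_crossing_def using x[of 0] x[of K] assms(7)
    by (intro bexI[of _ "x 0"] bexI[of _ "x K"]) auto
qed

lemma unit_cube_eq_cbox: "unit_cube = cbox 0 (\<chi> i. 1)"
  by (auto simp: unit_cube_def mem_box_cart)

lemma measure_lborel_cube_cart:
  assumes "s \<ge> 0"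
  shows "measure lborel (cbox a (a + (\<chi> i. s)) :: (real^'d) set) = s ^ CARD('d)"
proof -
  have "a \<in> cbox a (a + (\<chi> i. s))" using assms by (simp add: mem_box_cart)
  then have "cbox a (a + (\<chi> i. s)) \<noteq> {}" by blast
  then show ?thesis by (simp add: content_cbox_cart)
qed

lemma measure_diagonal_box:
  assumes "s \<ge> 0"
  shows "measure lborel (diagonal_box q q' s K j :: (real^'d) set) = s ^ CARD('d)"
  unfolding diagonal_box_def Let_def using assms by (rule measure_lborel_cube_cart)

lemma emeasure_unit_cube: "emeasure lborel (unit_cube :: (real^'d) set) = 1"
  using measure_lborel_cube_cart[of 1 "0 :: real^'d"]
  by (simp add: unit_cube_eq_cbox measure_def emeasure_lborel_cbox_finite)

lemma prob_space_sample: "prob_space (sample n :: (nat \<Rightarrow> real^'d) measure)"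
  unfolding sample_def
  by (intro prob_space_PiM prob_space_uniform_measure) (simp_all add: emeasure_unit_cube)

lemma measure_uniform_unit_cube:
  assumes "B \<subseteq> unit_cube" "B \<in> sets lborel"
  shows "measure (uniform_measure lborel (unit_cube :: (real^'d) set)) B = measure lborel B"
proof -
  have "measure lborel (unit_cube :: (real^'d) set) = 1"
    using emeasure_unit_cube by (simp add: measure_def)
  then show ?thesis
    using assms emeasure_unit_cube[where 'd = 'd]
    by (simp add: measure_uniform_measure Int_absorb1 unit_cube_eq_cbox)
qed

lemma prob_sample_avoids:
  assumes "B \<subseteq> unit_cube" "B \<in> sets lborel"
  shows "measure (sample n :: (nat \<Rightarrow> real^'d) measure) {\<omega> \<in> space (sample n). \<forall>i<n. \<omega> i \<notin> B}
     = (1 - measure lborel B) ^ n"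
proof -
  let ?U = "uniform_measure lborel (unit_cube :: (real^'d) set)"
  interpret U: prob_space ?U by (intro prob_space_uniform_measure) (simp_all add: emeasure_unit_cube)
  interpret P: product_sigma_finite "\<lambda>_. ?U" by standard
  have eq: "{\<omega> \<in> space (sample n). \<forall>i<n. \<omega> i \<notin> B} = Pi\<^sub>E {..<n} (\<lambda>_. - B)"
    by (auto simp: sample_def space_PiM PiE_iff extensional_def)
  have B_le: "measure lborel B \<le> 1" using U.prob_le_1[of B] measure_uniform_unit_cube[OF assms] by simp
  have "emeasure ?U (- B) = ennreal (1 - measure lborel B)"
    using U.prob_compl[of B] assms measure_uniform_unit_cube[OF assms]
    by (simp add: U.emeasure_eq_measure Compl_eq_Diff_UNIV)
  then have "emeasure (sample n) (Pi\<^sub>E {..<n} (\<lambda>_. - B)) = ennreal ((1 - measure lborel B) ^ n)"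
    using assms B_le unfolding sample_def by (subst P.emeasure_PiM) (auto simp: ennreal_power)
  then show ?thesis unfolding eq using B_le by (intro measure_eq_emeasure_eq_ennreal) auto
qed

lemma vle_measurable[measurable (raw)]:
  fixes f g :: "'a \<Rightarrow> real^'d"
  assumes f: "f \<in> borel_measurable M" and g: "g \<in> borel_measurable M"
  shows "Measurable.pred M (\<lambda>x. vle (f x) (g x))"
proof -
  have [measurable]: "(\<lambda>x. f x $ i) \<in> borel_measurable M" "(\<lambda>x. g x $ i) \<in> borel_measurable M" for i
    using measurable_compose[OF f borel_measurable_nth] measurable_compose[OF g borel_measurable_nth]
    by auto
  have "Measurable.pred M (\<lambda>x. \<forall>i\<in>UNIV. f x $ i \<le> g x $ i)"
    by (intro pred_intros_finite) measurable
  then show ?thesis by (simp add: vle_def)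
qed

lemma monotone_edge_measurable[measurable (raw)]:
  fixes f g :: "'a \<Rightarrow> real^'d"
  assumes [measurable]: "f \<in> borel_measurable M" "g \<in> borel_measurable M"
  shows "Measurable.pred M (\<lambda>x. monotone_edge r (f x) (g x))"
  unfolding monotone_edge_def by measurable

text \<open>Points of the product space are extensional, so coordinates \<open>j \<ge> n\<close> are constantly
  \<open>undefined\<close>; this makes every coordinate measurable without a side condition.\<close>
lemma sample_component_measurable[measurable]:
  "(\<lambda>\<omega>. \<omega> j) \<in> borel_measurable (sample n :: (nat \<Rightarrow> real^'d) measure)"
proof (cases "j < n")
  case True
  then show ?thesis
    using measurable_component_singleton[of j "{..<n}" "\<lambda>_. uniform_measure lborel (unit_cube :: (real^'d) set)"]
    unfolding sample_def by (simp cong: measurable_cong_sets)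
next
  case False
  then have "\<omega> j = undefined" if "\<omega> \<in> space (sample n :: (nat \<Rightarrow> real^'d) measure)" for \<omega>
    using that by (auto simp: sample_def space_PiM PiE_def extensional_def)
  then show ?thesis by (subst measurable_cong[where g = "\<lambda>_. undefined"]) auto
qed

text \<open>Turns the event into a countable union over index lists, which gives its measurability.\<close>
lemma monotone_crossing_image_iff:
  "monotone_crossing (\<omega> ` I) r q q' \<longleftrightarrow>
     (\<exists>js \<in> lists I. js \<noteq> [] \<and>
        dist (\<omega> (hd js)) q \<le> r / 2 \<and> dist (\<omega> (last js)) q' \<le> r / 2 \<and>
        vle q (\<omega> (hd js)) \<and> vle (\<omega> (last js)) q' \<and>
        (\<forall>i < length js - 1. monotone_edge r (\<omega> (js ! i)) (\<omega> (js ! Suc i))))"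
  (is "?lhs \<longleftrightarrow> (\<exists>js \<in> lists I. ?P js)")
proof
  assume ?lhs
  then obtain xs where xs: "monotone_path (\<omega> ` I) r xs"
    and ends: "dist (hd xs) q \<le> r / 2" "dist (last xs) q' \<le> r / 2" "vle q (hd xs)" "vle (last xs) q'"
    unfolding monotone_crossing_def monotone_connected_def by auto
  then obtain js where js: "js \<in> lists I" "xs = map \<omega> js"
    by (auto simp: monotone_path_iff lists_image)
  then have "?P js" using xs ends by (auto simp: monotone_path_iff hd_map last_map)
  with js show "\<exists>js \<in> lists I. ?P js" by blast
next
  assume "\<exists>js \<in> lists I. ?P js"
  then obtain js where js: "js \<in> lists I" "?P js" by blast
  then have "monotone_path (\<omega> ` I) r (map \<omega> js)" by (auto simp: monotone_path_iff)
  moreover have "hd js \<in> I" "last js \<in> I" using js by auto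
  ultimately show ?lhs
    using js unfolding monotone_crossing_def monotone_connected_def
    by (intro bexI[of _ "\<omega> (hd js)"] bexI[of _ "\<omega> (last js)"]) (auto simp: hd_map last_map)
qed

lemma monotone_crossing_sample_measurable [measurable]:
  "Measurable.pred (sample n :: (nat \<Rightarrow> real^'d) measure)
     (\<lambda>\<omega>. monotone_crossing (\<omega> ` {..<n}) r q q')"
  unfolding monotone_crossing_image_iff
  by (intro pred_intros_countable_bounded) measurable

lemma prob_monotone_crossing_ge:
  fixes q q' :: "real^'d"
  assumes "q \<in> unit_cube" "q' \<in> unit_cube" "\<And>i. s * (real K + 1) < q'$i - q$i" "s \<ge> 0"
    "K > 0" "real CARD('d) * (1 / real K + s) \<le> r" "real CARD('d) * s \<le> r / 2"
  shows "1 - (real K + 1) * (1 - s ^ CARD('d)) ^ n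
     \<le> measure (sample n :: (nat \<Rightarrow> real^'d) measure)
          {\<omega> \<in> space (sample n). monotone_crossing (\<omega> ` {..<n}) r q q'}"
proof -
  let ?P = "sample n :: (nat \<Rightarrow> real^'d) measure"
  interpret P: prob_space ?P by (rule prob_space_sample)
  define Empty where "Empty j = {\<omega> \<in> space ?P. \<forall>i<n. \<omega> i \<notin> diagonal_box q q' s K j}" for j
  have box_sets [measurable]: "diagonal_box q q' s K j \<in> sets borel" for j
    by (simp add: diagonal_box_def Let_def)
  have Empty_sets: "Empty j \<in> sets ?P" for j unfolding Empty_def by measurable
  have side: "q$i + s \<le> q'$i" for i
    using assms(3)[of i] assms(4) by (smt (verit) mult_le_cancel_left1 of_nat_0_le_iff)
  have "measure ?P (Empty j) = (1 - s ^ CARD('d)) ^ n" if "j \<le> K" for j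
    unfolding Empty_def
    using prob_sample_avoids[OF diagonal_box_subset_unit_cube[OF assms(1,2) side assms(4) that]]
    by (simp add: measure_diagonal_box[OF assms(4)])
  then have "(real K + 1) * (1 - s ^ CARD('d)) ^ n = (\<Sum>j\<le>K. measure ?P (Empty j))" by simp
  also have "\<dots> \<ge> measure ?P (\<Union>j\<le>K. Empty j)"
    using Empty_sets by (intro P.finite_measure_subadditive_finite) auto
  finally have "1 - (real K + 1) * (1 - s ^ CARD('d)) ^ n \<le> measure ?P (space ?P - (\<Union>j\<le>K. Empty j))"
    using Empty_sets by (subst P.prob_compl) auto
  also have "\<dots> \<le> measure ?P {\<omega> \<in> space ?P. monotone_crossing (\<omega> ` {..<n}) r q q'}"
  proof (intro P.finite_measure_mono subsetI)
    fix \<omega> assume "\<omega> \<in> space ?P - (\<Union>j\<le>K. Empty j)"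
    then show "\<omega> \<in> {\<omega> \<in> space ?P. monotone_crossing (\<omega> ` {..<n}) r q q'}"
      unfolding Empty_def
      by (auto intro!: monotone_crossing_if_diagonal_boxes_occupied[OF assms])
  qed measurable
  finally show ?thesis .
qed

lemma diagonal_box_parameters:
  fixes D K :: nat and \<delta> \<rho> s :: real
  assumes D: "D \<ge> 1" and \<delta>: "0 < \<delta>" "\<delta> \<le> 1" and \<rho>: "0 < \<rho>" "\<rho> \<le> 1"
    and K_def: "K = nat \<lceil>2 * real D / \<rho>\<rceil>" and s_def: "s = \<delta> * \<rho> / (8 * real D)"
  shows "K > 0" and "0 \<le> s" and "s \<le> 1" and "real K + 1 \<le> 4 * real D / \<rho>"
    and "s * (real K + 1) < \<delta>" and "real D * (1 / real K + s) \<le> \<rho>" and "real D * s \<le> \<rho> / 2"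
proof -
  have Dp: "real D \<ge> 1" using D by simp
  have K_ge: "real K \<ge> 2 * real D / \<rho>" using K_def by linarith
  have K_le: "real K \<le> 2 * real D / \<rho> + 1" using K_def \<rho> Dp by (simp add: of_nat_nat)
  have "2 * real D / \<rho> \<ge> 2" using \<rho> Dp by (simp add: field_simps)
  then show K_pos: "K > 0" and K1: "real K + 1 \<le> 4 * real D / \<rho>" using K_ge K_le by linarith+
  show s0: "0 \<le> s" using s_def \<delta> \<rho> Dp by simp
  have "\<delta> * \<rho> \<le> 1" using \<delta> \<rho> by (intro mult_le_one) auto
  then show "s \<le> 1" using s_def Dp by (simp add: divide_le_eq)
  have "s * (real K + 1) \<le> s * (4 * real D / \<rho>)" using K1 s0 by (rule mult_left_mono)
  also have "\<dots> = \<delta> / 2" using \<rho> Dp s_def by (simp add: field_simps)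
  finally show "s * (real K + 1) < \<delta>" using \<delta> by linarith
  have "real D / real K \<le> real D / (2 * real D / \<rho>)"
    using K_ge K_pos Dp \<rho> by (intro divide_left_mono) auto
  also have "\<dots> = \<rho> / 2" using Dp \<rho> by (simp add: field_simps)
  finally have "real D / real K \<le> \<rho> / 2" .
  moreover have "real D * s \<le> \<rho> / 8" using s_def \<delta> \<rho> Dp by (simp add: field_simps)
  ultimately show "real D * (1 / real K + s) \<le> \<rho>" and "real D * s \<le> \<rho> / 2"
    using \<rho> by (simp_all add: algebra_simps)
qed

lemma one_le_ln_nat: "n \<ge> 3 \<Longrightarrow> 1 \<le> ln (real n)"
  using exp_le by (subst ln_ge_iff) (auto intro: order.trans[of _ 3])

lemma mult_powr_inverse_power:
  fixes x f :: real and D :: nat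
  assumes "x > 0" "D \<ge> 1"
  shows "(f * x powr (1 / real D)) ^ D = f ^ D * x"
  using assms by (simp add: power_mult_distrib powr_power)

text \<open>For \<open>\<rho>^D \<ge> f log n / n\<close> with \<open>c f \<ge> 2\<close> the exponential is at most \<open>n\<^sup>-\<^sup>2\<close>,
  while \<open>1 / \<rho> \<le> n\<close>.\<close>
lemma small_radius_tail_bound:
  fixes D n :: nat and \<rho> c f :: real
  assumes D: "D \<ge> 1" and n: "n \<ge> 3" and \<rho>: "0 < \<rho>" "\<rho> \<le> 1"
    and f: "f \<ge> 1" "c * f \<ge> 2" and \<rho>_pow: "f * (ln (real n) / real n) \<le> \<rho> ^ D"
  shows "4 * real D / \<rho> * exp (- (real n * (c * \<rho> ^ D))) \<le> 4 * real D / real n"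
proof -
  have ln1: "1 \<le> ln (real n)" using n by (rule one_le_ln_nat)
  have "1 * 1 \<le> f * ln (real n)" using f ln1 by (intro mult_mono) auto
  then have "1 / real n \<le> f * (ln (real n) / real n)" by (simp add: divide_right_mono)
  also have "\<dots> \<le> \<rho>" using \<rho>_pow power_decreasing[of 1 D \<rho>] D \<rho> by simp
  finally have inv_\<rho>: "1 / \<rho> \<le> real n" using \<rho> n by (simp add: field_simps)
  have "2 * ln (real n) \<le> c * f * ln (real n)" using f ln1 by (intro mult_right_mono) auto
  also have "\<dots> \<le> real n * (c * \<rho> ^ D)"
  proof -
    have "0 < c" using f by (intro zero_less_mult_pos2[of c f]) auto
    then show ?thesis using \<rho>_pow n by (simp add: field_simps mult_left_mono)
  qed
  finally have "exp (- (real n * (c * \<rho> ^ D))) \<le> exp (- (2 * ln (real n)))" by simp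
  also have "\<dots> = 1 / real n ^ 2"
    using n by (simp add: exp_minus inverse_eq_divide exp_double)
  moreover have "4 * real D / \<rho> \<le> 4 * real D * real n"
    using mult_left_mono[OF inv_\<rho>, of "4 * real D"] by simp
  ultimately have "4 * real D / \<rho> * exp (- (real n * (c * \<rho> ^ D))) \<le> 4 * real D * real n * (1 / real n ^ 2)"
    using \<rho> by (intro mult_mono) auto
  also have "\<dots> = 4 * real D / real n" using n by (simp add: power2_eq_square)
  finally show ?thesis .
qed

lemma prob_monotone_crossing_ge_tail:
  fixes q q' :: "real^'d" and \<delta> c f :: real and n :: nat
  assumes q: "q \<in> unit_cube" "q' \<in> unit_cube" and \<delta>: "0 < \<delta>" "\<And>i. \<delta> \<le> q'$i - q$i"
    and n: "n \<ge> 3" and f: "f \<ge> 1" "c * f \<ge> 2" and c_def: "c = (\<delta> / (8 * real CARD('d))) ^ CARD('d)"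
  defines "r \<equiv> f * (ln (real n) / real n) powr (1 / real CARD('d))"
  shows "1 - (4 * real CARD('d) * exp (- (c * real n)) + 4 * real CARD('d) / real n)
     \<le> measure (sample n :: (nat \<Rightarrow> real^'d) measure)
          {\<omega> \<in> space (sample n). monotone_crossing (\<omega> ` {..<n}) r q q'}"
proof -
  define D where "D = CARD('d)"
  \<comment> \<open>capping the radius at 1 keeps the cubes inside the unit cube\<close>
  define \<rho> where "\<rho> = min r 1"
  define K where "K = nat \<lceil>2 * real D / \<rho>\<rceil>"
  define s where "s = \<delta> * \<rho> / (8 * real D)"
  have D: "D \<ge> 1" unfolding D_def by simp
  have \<delta>1: "\<delta> \<le> 1"
    using \<delta>(2)[of undefined] q unfolding unit_cube_def by (smt (verit) mem_Collect_eq)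
  have log_pos: "ln (real n) / real n > 0" using one_le_ln_nat[OF n] n by simp
  then have "r > 0" unfolding r_def using f n by (intro mult_pos_pos) auto
  then have \<rho>: "0 < \<rho>" "\<rho> \<le> 1" "\<rho> \<le> r" by (auto simp: \<rho>_def)
  note par = diagonal_box_parameters[OF D \<delta>(1) \<delta>1 \<rho>(1,2) K_def s_def]
  have prob_ge: "1 - (real K + 1) * (1 - s ^ D) ^ n
     \<le> measure (sample n :: (nat \<Rightarrow> real^'d) measure)
          {\<omega> \<in> space (sample n). monotone_crossing (\<omega> ` {..<n}) r q q'}"
    unfolding D_def using par \<rho>(3) \<delta>(2)
    by (intro prob_monotone_crossing_ge q) (auto simp: D_def intro: less_le_trans)
  have sD_le: "s ^ D \<le> 1" using par(2,3) by (rule power_le_one)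
  have "(1 - s ^ D) ^ n \<le> exp (- (real n * (c * \<rho> ^ D)))"
  proof -
    have "s = \<delta> / (8 * real D) * \<rho>" by (simp add: s_def)
    then have sD: "s ^ D = c * \<rho> ^ D" unfolding c_def D_def by (simp only: power_mult_distrib)
    have "(1 - real n * s ^ D / real n) ^ n \<le> exp (- (real n * s ^ D))"
      using n sD_le by (intro exp_ge_one_minus_x_over_n_power_n) auto
    then show ?thesis using n by (simp add: sD)
  qed
  then have "(real K + 1) * (1 - s ^ D) ^ n \<le> 4 * real D / \<rho> * exp (- (real n * (c * \<rho> ^ D)))"
    using par(4) sD_le \<rho> by (intro mult_mono) auto
  moreover have "4 * real D / \<rho> * exp (- (real n * (c * \<rho> ^ D)))
      \<le> 4 * real D * exp (- (c * real n)) + 4 * real D / real n"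
  proof (cases "r \<ge> 1")
    case True
    then show ?thesis by (simp add: \<rho>_def algebra_simps)
  next
    case False
    have "\<rho> ^ D = f ^ D * (ln (real n) / real n)"
      using False log_pos D by (simp add: \<rho>_def r_def D_def mult_powr_inverse_power)
    moreover have "f \<le> f ^ D" using power_increasing[of 1 D f] D f by simp
    ultimately have "f * (ln (real n) / real n) \<le> \<rho> ^ D"
      using mult_right_mono[OF _ less_imp_le[OF log_pos]] by simp
    then show ?thesis
      using small_radius_tail_bound[OF D n \<rho>(1,2) f] by (simp add: add_increasing)
  qed
  ultimately show ?thesis using prob_ge unfolding D_def by linarith
qed

lemma LIMSEQ_exp_neg_mult_plus_inverse:
  fixes a c :: real
  assumes "c > 0"
  shows "(\<lambda>n. a * exp (- (c * real n)) + a / real n) \<longlonglongrightarrow> 0"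
proof -
  have "(\<lambda>n. exp (- c) ^ n) \<longlonglongrightarrow> 0" using assms by (intro LIMSEQ_power_zero) simp
  then have "(\<lambda>n. exp (- (c * real n))) \<longlonglongrightarrow> 0"
    by (simp add: exp_of_nat_mult[symmetric] mult.commute)
  moreover have "(\<lambda>n. a / real n) \<longlonglongrightarrow> 0"
    by (intro tendsto_divide_0[OF tendsto_const] filterlim_at_top_imp_at_infinity
        filterlim_real_sequentially)
  ultimately show ?thesis using tendsto_add[OF tendsto_mult_right_zero] by simp
qed

theorem lemma7:
  fixes f :: "nat \<Rightarrow> real" and r :: "nat \<Rightarrow> real"
    and q q' :: "real ^ 'd" and \<delta> :: real
  assumes d2: "CARD('d) \<ge> 2"
    and f_lim: "filterlim f at_top sequentially"
    and r_def: "\<And>n. r n = f n * (ln (real n) / real n) powr (1 / real CARD('d))"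
    and q_in: "q \<in> unit_cube" and q'_in: "q' \<in> unit_cube"
    and \<delta>_pos: "\<delta> > 0" and qq': "vle_delta \<delta> q q'"
  shows "(\<lambda>n. measure (sample n :: (nat \<Rightarrow> real ^ 'd) measure)
            {\<omega> \<in> space (sample n).
               \<exists>X \<in> \<omega> ` {..<n}. \<exists>X' \<in> \<omega> ` {..<n}.
                 dist X q \<le> r n / 2 \<and> dist X' q' \<le> r n / 2 \<and>
                 vle q X \<and> vle X' q' \<and>
                 monotone_connected (\<omega> ` {..<n}) (r n) X X'})
         \<longlonglongrightarrow> 1"
proof -
  define c where "c = (\<delta> / (8 * real CARD('d))) ^ CARD('d)"
  have "c > 0" using \<delta>_pos by (simp add: c_def)
  let ?p = "\<lambda>n. measure (sample n :: (nat \<Rightarrow> real ^ 'd) measure)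
    {\<omega> \<in> space (sample n). monotone_crossing (\<omega> ` {..<n}) (r n) q q'}"
  have "eventually (\<lambda>n. max 1 (2 / c) \<le> f n) sequentially"
    using f_lim unfolding filterlim_at_top by blast
  then have "eventually (\<lambda>n. 1 - (4 * real CARD('d) * exp (- (c * real n)) + 4 * real CARD('d) / real n)
      \<le> ?p n) sequentially"
    using eventually_ge_at_top[of 3]
  proof eventually_elim
    case (elim n)
    then have "1 \<le> f n" "2 \<le> c * f n" using \<open>c > 0\<close> by (auto simp: field_simps)
    with prob_monotone_crossing_ge_tail[OF q_in q'_in \<delta>_pos vle_delta_le[OF qq'] elim(2) _ _ c_def]
    show ?case by (simp only: r_def)
  qed
  moreover have "eventually (\<lambda>n. ?p n \<le> 1) sequentially"
    by (intro always_eventually allI prob_space.prob_le_1 prob_space_sample)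
  moreover have "(\<lambda>n. 1 - (4 * real CARD('d) * exp (- (c * real n)) + 4 * real CARD('d) / real n))
      \<longlonglongrightarrow> 1"
    using tendsto_diff[OF tendsto_const LIMSEQ_exp_neg_mult_plus_inverse[OF \<open>c > 0\<close>]] by simp
  ultimately have "?p \<longlonglongrightarrow> 1" by (rule tendsto_sandwich[OF _ _ _ tendsto_const])
  then show ?thesis unfolding monotone_crossing_def .
qed

end
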